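(* Let $\mathbf s\in\mathbb N$, $\gamma\ge0$ with $\mathbf s+\gamma>\frac12$. There exists a strictly increasing function $C:\mathbb R_{\ge0}\times\mathbb R_{\ge0}\to\mathbb R_{\ge0}$ such that for every $\delta\in(0,1)$, $R\in[1,+\infty]$, $N\in\mathbb N^+\cup\{+\infty\}$, every $\tau=T/K$, every $n\in\mathbb N$ with $n\le K-1$ and all $z,w\in\pi_NL^2$, almost surely $$\|\Phi_{n,\tau}(w)-\Phi_{n,\tau}(z)\|_{H^{\mathbf s}}\le\big(1+\tau\,C(\|w\|_{H^{\mathbf s+\gamma}},\|z\|_{H^{\mathbf s+\gamma}})\big)\|w-z\|_{H^{\mathbf s}}.$$
   Context: $\mathbb T=\mathbb R/(2\pi\mathbb Z)$, $\hat f_k$ Fourier coefficients, $\|f\|_{H^r}^2=\sum_k(1+|k|^{2r})|\hat f_k|^2$; $\pi_N$ the Fourier projection onto $|k|\le N$. $B$ standard Brownian motion, $B^R$ is $B(t)$ clipped to $[-R\sqrt t,R\sqrt t]$, $B^{\delta,R}(t)=B^R(\lfloor t\rfloor_\delta)+\frac{t-\lfloor t\rfloor_\delta}{\delta}(B^R(\lfloor t\rfloor_\delta+\delta)-B^R(\lfloor t\rfloor_\delta))$. $T>0$, $K\in\mathbb N^+$, $\tau=T/K$, $t_n=n\tau$, $\lambda\ne0$ real. Define $I_{n,\tau}(k^2)=\int_0^\tau e^{2\mathbf ik^2(B^{\delta,R}(t_n+s)-B^{\delta,R}(t_n))}ds$ and the one-step map (SDLRI) $\Phi_{n,\tau}$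 on $\pi_NL^2$ by, for $|k|\le N$, $$\widehat{\Phi_{n,\tau}(z)}_k=e^{-\mathbf i(B^{\delta,R}(t_n+\tau)-B^{\delta,R}(t_n))k^2}\Big(\hat z_k+\mathbf i\lambda\!\!\sum_{\substack{k+k_1=k_2+k_3\\|k_1|,|k_2|,|k_3|\le N}}\!\!I_{n,\tau}(k_1^2)\,\overline{\hat z_{k_1}}\hat z_{k_2}\hat z_{k_3}\Big),$$ and $\widehat{\Phi_{n,\tau}(z)}_k=0$ for $|k|>N$. *)

theory Defs
  imports "HOL-Probability.Probability" "HOL-Library.Extended_Nat"
begin

text \<open>Standard Brownian motion on a probability space M, given as a family of sample
paths B omega : real -> real (only t >= 0 is relevant).\<close>
definition brownian_motion :: "'a measure \<Rightarrow> ('a \<Rightarrow> real \<Rightarrow> real) \<Rightarrow> bool" where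
  "brownian_motion M B \<longleftrightarrow> prob_space M \<and>
     (\<forall>t. (\<lambda>\<omega>. B \<omega> t) \<in> borel_measurable M) \<and>
     (\<forall>\<omega>\<in>space M. B \<omega> 0 = 0 \<and> continuous_on {0..} (B \<omega>)) \<and>
     (\<forall>s t. 0 \<le> s \<and> s < t \<longrightarrow>
        distributed M lborel (\<lambda>\<omega>. B \<omega> t - B \<omega> s)
          (\<lambda>x. ennreal (normal_density 0 (sqrt (t - s)) x))) \<and>
     (\<forall>(ts :: nat \<Rightarrow> real) m. 0 \<le> ts 0 \<and> strict_mono ts \<longrightarrow>
        prob_space.indep_vars M (\<lambda>_. borel)
          (\<lambda>i \<omega>. B \<omega> (ts (Suc i)) - B \<omega> (ts i)) {..<m})"

definition clipB :: "ereal \<Rightarrow> (real \<Rightarrow> real) \<Rightarrow> real \<Rightarrow> real" where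
  "clipB R b t = (case R of ereal r \<Rightarrow> max (- r * sqrt t) (min (r * sqrt t) (b t)) | _ \<Rightarrow> b t)"

definition floor_delta :: "real \<Rightarrow> real \<Rightarrow> real" where
  "floor_delta \<delta> t = \<delta> * of_int \<lfloor>t / \<delta>\<rfloor>"

definition interpB :: "real \<Rightarrow> ereal \<Rightarrow> (real \<Rightarrow> real) \<Rightarrow> real \<Rightarrow> real" where
  "interpB \<delta> R b t = (let f = floor_delta \<delta> t in
      clipB R b f + (t - f) / \<delta> * (clipB R b (f + \<delta>) - clipB R b f))"

definition I_int :: "real \<Rightarrow> ereal \<Rightarrow> (real \<Rightarrow> real) \<Rightarrow> real \<Rightarrow> real \<Rightarrow> real \<Rightarrow> complex" where
  "I_int \<delta> R b tn \<tau> m =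
     integral {0..\<tau>} (\<lambda>s. cis (2 * m * (interpB \<delta> R b (tn + s) - interpB \<delta> R b tn)))"

definition inN :: "enat \<Rightarrow> int \<Rightarrow> bool" where
  "inN N k \<longleftrightarrow> enat (nat \<bar>k\<bar>) \<le> N"

text \<open>Elements of pi_N L^2, represented by their Fourier coefficients (int => complex).\<close>
definition in_piN :: "enat \<Rightarrow> (int \<Rightarrow> complex) \<Rightarrow> bool" where
  "in_piN N z \<longleftrightarrow> (\<forall>k. \<not> inN N k \<longrightarrow> z k = 0)"

text \<open>Sobolev weight |k|^{2r}, with the convention 0^0 = 1.\<close>
definition hs_weight :: "real \<Rightarrow> int \<Rightarrow> real" where
  "hs_weight r k = (if k = 0 \<and> r = 0 then 1 else \<bar>real_of_int k\<bar> powr (2 * r))"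

definition hs_summable :: "real \<Rightarrow> (int \<Rightarrow> complex) \<Rightarrow> bool" where
  "hs_summable r f \<longleftrightarrow> (\<lambda>k. (1 + hs_weight r k) * (cmod (f k))\<^sup>2) summable_on UNIV"

definition hs_norm :: "real \<Rightarrow> (int \<Rightarrow> complex) \<Rightarrow> real" where
  "hs_norm r f = sqrt (\<Sum>\<^sub>\<infinity>k. (1 + hs_weight r k) * (cmod (f k))\<^sup>2)"

definition Phi :: "real \<Rightarrow> ereal \<Rightarrow> (real \<Rightarrow> real) \<Rightarrow> real \<Rightarrow> enat \<Rightarrow> real \<Rightarrow> real
                    \<Rightarrow> (int \<Rightarrow> complex) \<Rightarrow> (int \<Rightarrow> complex)" where
  "Phi \<delta> R b lam N tn \<tau> z = (\<lambda>k. if inN N k then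
      cis (- (interpB \<delta> R b (tn + \<tau>) - interpB \<delta> R b tn) * (of_int k)\<^sup>2) *
      (z k + \<i> * complex_of_real lam *
        (\<Sum>\<^sub>\<infinity>(k1, k2, k3) \<in> {(k1, k2, k3). k + k1 = k2 + k3 \<and> inN N k1 \<and> inN N k2 \<and> inN N k3}.
            I_int \<delta> R b tn \<tau> ((of_int k1)\<^sup>2) * cnj (z k1) * z k2 * z k3))
    else 0)"

end

theory Submission
  imports Defs
begin

(* The estimate is deterministic: |I_{n,tau}(m)| <= tau on every sample path, so the bound holds
   for every omega.  The difference of the cubic terms of w and z splits into three trilinear
   convolutions, each containing w - z once.  On the resonance set k + k1 = k2 + k3 one has
   <k>^s <= 3^s (<k1>^s + <k2>^s + <k3>^s), so the H^s weight can be moved onto a single factor,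
   measured in weighted l2, while the other two are measured in l1; Young's inequality for
   convolutions then bounds the result.  The l1 norms are controlled by the H^(s+gamma) norms
   by Cauchy-Schwarz, since s + gamma > 1/2 makes sum_k <k>^(-2(s+gamma)) finite. *)

section \<open>Sobolev weights and norms\<close>

definition sobolev_weight :: "real \<Rightarrow> int \<Rightarrow> real" where
  "sobolev_weight r k = 1 + hs_weight r k"

lemma hs_weight_nonneg: "0 \<le> hs_weight r k"
  by (simp add: hs_weight_def)

lemma sobolev_weight_pos: "0 < sobolev_weight r k"
  using hs_weight_nonneg[of r k] by (simp add: sobolev_weight_def)

lemma sobolev_weight_minus: "sobolev_weight r (- k) = sobolev_weight r k"
  by (simp add: sobolev_weight_def hs_weight_def)

lemma sobolev_weight_of_nat: "sobolev_weight (real s) k = 1 + \<bar>real_of_int k\<bar> ^ (2 * s)"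
  by (cases "k = 0") (auto simp: sobolev_weight_def hs_weight_def powr_realpow[symmetric])

lemma sobolev_weight_mono:
  assumes "r \<le> r'"
  shows "sobolev_weight r k \<le> 2 * sobolev_weight r' k"
proof (cases "k = 0")
  case True
  then show ?thesis using hs_weight_nonneg[of r' 0] by (auto simp: sobolev_weight_def hs_weight_def)
next
  case False
  then have "\<bar>real_of_int k\<bar> powr (2 * r) \<le> \<bar>real_of_int k\<bar> powr (2 * r')"
    using assms by (intro powr_mono) auto
  moreover have "0 \<le> \<bar>real_of_int k\<bar> powr (2 * r')" by simp
  ultimately show ?thesis using False by (simp add: sobolev_weight_def hs_weight_def del: powr_ge_zero)
qed

lemma summable_on_inverse_sobolev_weight:
  assumes "r > 1/2"
  shows "(\<lambda>k. 1 / sobolev_weight r k) summable_on (UNIV :: int set)"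
proof -
  define g where "g n = 1 / sobolev_weight r (int n)" for n :: nat
  have "summable (\<lambda>n::nat. real n powr (- 2 * r))"
    using assms by (subst summable_real_powr_iff) simp
  then have "summable g"
  proof (rule summable_comparison_test'[of _ 1])
    fix n :: nat assume n: "1 \<le> n"
    have "norm (g n) = 1 / (1 + real n powr (2 * r))"
      using n by (simp add: g_def sobolev_weight_def hs_weight_def)
    also have "\<dots> \<le> 1 / real n powr (2 * r)"
      using n by (intro divide_left_mono) (auto intro!: mult_pos_pos add_pos_pos)
    also have "\<dots> = real n powr (- 2 * r)"
      by (simp add: powr_minus divide_inverse)
    finally show "norm (g n) \<le> real n powr (- 2 * r)" .
  qed
  then have g: "g summable_on UNIV"
    by (rule summable_nonneg_imp_summable_on) (simp add: g_def sobolev_weight_pos less_imp_le)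
  have "(\<lambda>k. 1 / sobolev_weight r k) summable_on (range int)"
    by (subst summable_on_reindex) (auto simp: o_def g_def[symmetric] g)
  moreover have "(\<lambda>k. 1 / sobolev_weight r k) summable_on (range (\<lambda>n. - int n))"
    by (subst summable_on_reindex) (auto simp: inj_on_def o_def sobolev_weight_minus g_def[symmetric] g)
  moreover have "range int \<union> range (\<lambda>n. - int n) = (UNIV :: int set)"
  proof (rule set_eqI)
    fix x :: int
    show "x \<in> range int \<union> range (\<lambda>n. - int n) \<longleftrightarrow> x \<in> UNIV"
      by (cases "x \<ge> 0") (auto simp: image_iff intro: exI[of _ "nat x"] exI[of _ "nat (- x)"])
  qed
  ultimately show ?thesis using summable_on_union by metis
qed

lemma hs_norm_eq: "hs_norm r f = sqrt (\<Sum>\<^sub>\<infinity>k. sobolev_weight r k * (cmod (f k))\<^sup>2)"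
  by (simp add: hs_norm_def sobolev_weight_def)

lemma hs_summable_iff: "hs_summable r f \<longleftrightarrow> (\<lambda>k. sobolev_weight r k * (cmod (f k))\<^sup>2) summable_on UNIV"
  by (simp add: hs_summable_def sobolev_weight_def)

lemma hs_norm_nonneg: "0 \<le> hs_norm r f"
  unfolding hs_norm_eq by (intro real_sqrt_ge_zero infsum_nonneg) (simp add: sobolev_weight_pos less_imp_le)

lemma hs_summable_mono:
  assumes "r \<le> r'" and "hs_summable r' f"
  shows "hs_summable r f"
  unfolding hs_summable_iff
proof (rule summable_on_comparison_test)
  show "(\<lambda>k. 2 * (sobolev_weight r' k * (cmod (f k))\<^sup>2)) summable_on UNIV"
    using assms(2) unfolding hs_summable_iff by (rule summable_on_cmult_right)
  show "sobolev_weight r k * (cmod (f k))\<^sup>2 \<le> 2 * (sobolev_weight r' k * (cmod (f k))\<^sup>2)" for k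
    using mult_right_mono[OF sobolev_weight_mono[OF assms(1)], of "(cmod (f k))\<^sup>2" k] by simp
  show "0 \<le> sobolev_weight r k * (cmod (f k))\<^sup>2" for k
    using sobolev_weight_pos[of r k] by simp
qed

lemma hs_summable_diff:
  assumes "hs_summable r w" and "hs_summable r z"
  shows "hs_summable r (w - z)"
  unfolding hs_summable_iff
proof (rule summable_on_comparison_test)
  show "(\<lambda>k. 2 * (sobolev_weight r k * (cmod (w k))\<^sup>2) + 2 * (sobolev_weight r k * (cmod (z k))\<^sup>2)) summable_on UNIV"
    using assms unfolding hs_summable_iff by (intro summable_on_add summable_on_cmult_right)
  fix k
  have "(cmod (w k - z k))\<^sup>2 \<le> (cmod (w k) + cmod (z k))\<^sup>2"
    by (intro power_mono norm_triangle_ineq4) simp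
  also have "\<dots> \<le> 2 * (cmod (w k))\<^sup>2 + 2 * (cmod (z k))\<^sup>2"
    using zero_le_power2[of "cmod (w k) - cmod (z k)"] by (simp add: power2_eq_square algebra_simps)
  finally have "(cmod (w k - z k))\<^sup>2 \<le> 2 * (cmod (w k))\<^sup>2 + 2 * (cmod (z k))\<^sup>2" .
  from mult_left_mono[OF this less_imp_le[OF sobolev_weight_pos]]
  show "sobolev_weight r k * (cmod ((w - z) k))\<^sup>2
      \<le> 2 * (sobolev_weight r k * (cmod (w k))\<^sup>2) + 2 * (sobolev_weight r k * (cmod (z k))\<^sup>2)"
    by (simp add: algebra_simps)
  show "0 \<le> sobolev_weight r k * (cmod ((w - z) k))\<^sup>2"
    using sobolev_weight_pos[of r k] by simp
qed

lemma sum_le_hs_norm_sq: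
  assumes "hs_summable r f" and "finite X"
  shows "(\<Sum>k\<in>X. sobolev_weight r k * (cmod (f k))\<^sup>2) \<le> (hs_norm r f)\<^sup>2"
proof -
  have nonneg: "0 \<le> sobolev_weight r k * (cmod (f k))\<^sup>2" for k
    using sobolev_weight_pos[of r k] by simp
  have "(\<Sum>k\<in>X. sobolev_weight r k * (cmod (f k))\<^sup>2) \<le> (\<Sum>\<^sub>\<infinity>k. sobolev_weight r k * (cmod (f k))\<^sup>2)"
    using assms nonneg by (intro finite_sum_le_infsum) (auto simp: hs_summable_iff)
  also have "\<dots> = (hs_norm r f)\<^sup>2"
    unfolding hs_norm_eq using nonneg by (simp add: infsum_nonneg)
  finally show ?thesis .
qed

definition l1_embedding_const :: "real \<Rightarrow> real" where
  "l1_embedding_const r = sqrt (\<Sum>\<^sub>\<infinity>k. 1 / sobolev_weight r k)"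

lemma l1_embedding_const_nonneg: "0 \<le> l1_embedding_const r"
  unfolding l1_embedding_const_def
  by (intro real_sqrt_ge_zero infsum_nonneg) (simp add: sobolev_weight_pos less_imp_le)

lemma sum_norm_le_hs_norm:
  assumes "r > 1/2" and "hs_summable r f" and "finite X"
  shows "(\<Sum>k\<in>X. cmod (f k)) \<le> l1_embedding_const r * hs_norm r f"
proof -
  define \<rho> where "\<rho> k = sqrt (sobolev_weight r k)" for k
  have \<rho>: "0 < \<rho> k" "\<rho> k \<noteq> 0" for k using sobolev_weight_pos[of r k] by (simp_all add: \<rho>_def)
  have "(\<Sum>k\<in>X. cmod (f k)) = (\<Sum>k\<in>X. \<bar>\<rho> k * cmod (f k)\<bar> * \<bar>1 / \<rho> k\<bar>)"
    using \<rho> by (intro sum.cong) (auto simp: abs_mult less_imp_le)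
  also have "\<dots> \<le> L2_set (\<lambda>k. \<rho> k * cmod (f k)) X * L2_set (\<lambda>k. 1 / \<rho> k) X"
    by (rule L2_set_mult_ineq)
  also have "\<dots> \<le> hs_norm r f * l1_embedding_const r"
  proof (rule mult_mono)
    have "L2_set (\<lambda>k. \<rho> k * cmod (f k)) X = sqrt (\<Sum>k\<in>X. sobolev_weight r k * (cmod (f k))\<^sup>2)"
      unfolding L2_set_def \<rho>_def by (simp add: power_mult_distrib sobolev_weight_pos less_imp_le)
    also have "\<dots> \<le> hs_norm r f"
      using real_sqrt_le_mono[OF sum_le_hs_norm_sq[OF assms(2,3)]] by (simp add: hs_norm_nonneg)
    finally show "L2_set (\<lambda>k. \<rho> k * cmod (f k)) X \<le> hs_norm r f" .
    have "L2_set (\<lambda>k. 1 / \<rho> k) X = sqrt (\<Sum>k\<in>X. 1 / sobolev_weight r k)"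
      unfolding L2_set_def \<rho>_def by (simp add: power_divide sobolev_weight_pos less_imp_le)
    also have "\<dots> \<le> l1_embedding_const r"
      unfolding l1_embedding_const_def using summable_on_inverse_sobolev_weight[OF assms(1)] assms(3)
      by (intro real_sqrt_le_mono finite_sum_le_infsum) (auto simp: sobolev_weight_pos less_imp_le)
    finally show "L2_set (\<lambda>k. 1 / \<rho> k) X \<le> l1_embedding_const r" .
  qed (auto simp: hs_norm_nonneg)
  finally show ?thesis by (simp add: mult.commute)
qed

section \<open>Bounds on \<open>\<ell>\<^sup>1\<close> and \<open>\<ell>\<^sup>2\<close> norms\<close>

(* Stated through finite partial sums, so that no summability side conditions arise. *)
definition l1_le :: "('a \<Rightarrow> real) \<Rightarrow> real \<Rightarrow> bool" where
  "l1_le g G \<longleftrightarrow> (\<forall>x. 0 \<le> g x) \<and> (\<forall>X. finite X \<longrightarrow> sum g X \<le> G)"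

definition l2_le :: "('a \<Rightarrow> real) \<Rightarrow> real \<Rightarrow> bool" where
  "l2_le f A \<longleftrightarrow> (\<forall>x. 0 \<le> f x) \<and> 0 \<le> A \<and> (\<forall>X. finite X \<longrightarrow> L2_set f X \<le> A)"

lemma l1_le_bound_nonneg: "l1_le g G \<Longrightarrow> 0 \<le> G"
  unfolding l1_le_def by (metis finite.emptyI sum.empty)

lemma l1_le_mono: "l1_le g G \<Longrightarrow> G \<le> G' \<Longrightarrow> l1_le g G'"
  unfolding l1_le_def by (auto intro: order_trans)

lemma l2_le_imp_l1_le_square:
  assumes "l2_le f A"
  shows "l1_le (\<lambda>x. (f x)\<^sup>2) (A\<^sup>2)"
  unfolding l1_le_def
proof (intro conjI allI impI)
  fix X :: "'a set" assume "finite X"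
  then have "sqrt (\<Sum>x\<in>X. (f x)\<^sup>2) \<le> A" using assms by (simp add: l2_le_def L2_set_def)
  then show "(\<Sum>x\<in>X. (f x)\<^sup>2) \<le> A\<^sup>2"
    by (rule sqrt_le_D)
qed simp

lemma l2_le_mono: "l2_le f A \<Longrightarrow> A \<le> B \<Longrightarrow> l2_le f B"
  unfolding l2_le_def by (auto intro: order_trans)

lemma l2_le_dominated:
  assumes "l2_le g A" and "\<And>x. 0 \<le> f x" and "\<And>x. f x \<le> g x" and "A \<le> B"
  shows "l2_le f B"
proof -
  have "L2_set f X \<le> L2_set g X" for X using assms(2,3) by (intro L2_set_mono) auto
  then show ?thesis using assms unfolding l2_le_def by (meson order_trans)
qed

lemma l2_le_add:
  assumes "l2_le f A" and "l2_le g B"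
  shows "l2_le (\<lambda>x. f x + g x) (A + B)"
  unfolding l2_le_def
proof (intro conjI allI impI)
  fix X :: "'a set" assume "finite X"
  then show "L2_set (\<lambda>x. f x + g x) X \<le> A + B"
    using assms L2_set_triangle_ineq[of f g X] by (fastforce simp: l2_le_def)
qed (use assms in \<open>auto simp: l2_le_def\<close>)

lemma l2_le_cmult:
  assumes "l2_le f A" and "0 \<le> c"
  shows "l2_le (\<lambda>x. c * f x) (c * A)"
  using assms unfolding l2_le_def by (auto simp: L2_set_right_distrib[symmetric] intro: mult_left_mono)

lemma l2_le_of_tendsto:
  fixes net :: "'b filter"
  assumes "net \<noteq> bot" and "\<And>x. ((\<lambda>i. u i x) \<longlongrightarrow> v x) net"
    and "\<forall>\<^sub>F i in net. l2_le (u i) B" and "\<And>x. 0 \<le> v x" and "0 \<le> B"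
  shows "l2_le v B"
  unfolding l2_le_def
proof (intro conjI allI impI)
  fix X :: "'a set" assume "finite X"
  show "L2_set v X \<le> B"
  proof (rule tendsto_upperbound)
    show "((\<lambda>i. L2_set (u i) X) \<longlongrightarrow> L2_set v X) net"
      unfolding L2_set_def by (intro tendsto_intros assms(2))
    show "\<forall>\<^sub>F i in net. L2_set (u i) X \<le> B"
      using assms(3) \<open>finite X\<close> by (auto simp: l2_le_def elim: eventually_mono)
  qed (use assms(1) in simp)
qed (use assms in auto)

lemma l2_le_hs_norm:
  assumes "hs_summable r f"
  shows "l2_le (\<lambda>k. sqrt (sobolev_weight r k) * cmod (f k)) (hs_norm r f)"
  unfolding l2_le_def
proof (intro conjI allI impI)
  fix X :: "int set" assume "finite X"
  have "L2_set (\<lambda>k. sqrt (sobolev_weight r k) * cmod (f k)) X = sqrt (\<Sum>k\<in>X. sobolev_weight r k * (cmod (f k))\<^sup>2)"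
    unfolding L2_set_def by (simp add: power_mult_distrib sobolev_weight_pos less_imp_le)
  also have "\<dots> \<le> hs_norm r f"
    using real_sqrt_le_mono[OF sum_le_hs_norm_sq[OF assms \<open>finite X\<close>]] by (simp add: hs_norm_nonneg)
  finally show "L2_set (\<lambda>k. sqrt (sobolev_weight r k) * cmod (f k)) X \<le> hs_norm r f" .
qed (auto simp: hs_norm_nonneg sobolev_weight_pos less_imp_le)

lemma l2_le_hs_norm_mono:
  assumes "r \<le> r'" and "hs_summable r' f"
  shows "l2_le (\<lambda>k. sqrt (sobolev_weight r k) * cmod (f k)) (sqrt 2 * hs_norm r' f)"
proof (rule l2_le_dominated)
  show "l2_le (\<lambda>k. sqrt 2 * (sqrt (sobolev_weight r' k) * cmod (f k))) (sqrt 2 * hs_norm r' f)"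
    by (intro l2_le_cmult l2_le_hs_norm assms(2)) simp
  show "sqrt (sobolev_weight r k) * cmod (f k) \<le> sqrt 2 * (sqrt (sobolev_weight r' k) * cmod (f k))" for k
    using sobolev_weight_mono[OF assms(1), of k]
    by (simp add: mult.assoc[symmetric] real_sqrt_mult[symmetric] mult_right_mono)
qed (auto simp: sobolev_weight_pos less_imp_le)

lemma l1_le_hs_norm:
  assumes "r > 1/2" and "hs_summable r f"
  shows "l1_le (\<lambda>k. cmod (f k)) (l1_embedding_const r * hs_norm r f)"
  unfolding l1_le_def using sum_norm_le_hs_norm[OF assms] by auto

lemma hs_norm_le_if_l2_le:
  assumes "l2_le (\<lambda>k. sqrt (sobolev_weight r k) * cmod (f k)) B"
  shows "hs_norm r f \<le> B"
proof (cases "(\<lambda>k. sobolev_weight r k * (cmod (f k))\<^sup>2) summable_on UNIV")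
  case True
  have "(\<Sum>k\<in>X. sobolev_weight r k * (cmod (f k))\<^sup>2) \<le> B\<^sup>2" if "finite X" for X
    using l2_le_imp_l1_le_square[OF assms] that
    by (simp add: l1_le_def power_mult_distrib sobolev_weight_pos less_imp_le)
  then have "(\<Sum>\<^sub>\<infinity>k. sobolev_weight r k * (cmod (f k))\<^sup>2) \<le> B\<^sup>2"
    by (rule infsum_le_finite_sums[OF True])
  then show ?thesis
    unfolding hs_norm_eq by (rule real_le_lsqrt[rotated]) (use assms in \<open>simp add: l2_le_def\<close>)
next
  case False
  then show ?thesis using assms by (simp add: hs_norm_eq infsum_not_exists l2_le_def)
qed

section \<open>Trilinear convolutions\<close>

lemma sum_product3:
  fixes f :: "'a \<Rightarrow> 'r::comm_semiring_1" and g :: "'b \<Rightarrow> 'r" and h :: "'c \<Rightarrow> 'r"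
  shows "(\<Sum>y\<in>A \<times> B \<times> C. f (fst y) * g (fst (snd y)) * h (snd (snd y))) = sum f A * sum g B * sum h C"
proof -
  have "sum f A * sum g B * sum h C = (\<Sum>a\<in>A. f a * (sum g B * sum h C))"
    by (simp only: mult.assoc sum_distrib_right)
  also have "\<dots> = (\<Sum>a\<in>A. \<Sum>b\<in>B. \<Sum>c\<in>C. f a * g b * h c)"
    by (simp add: sum_distrib_left sum_distrib_right mult.assoc sum.swap[of _ B])
  also have "\<dots> = (\<Sum>(a, b, c)\<in>A \<times> B \<times> C. f a * g b * h c)"
    by (simp add: sum.cartesian_product)
  finally show ?thesis by (simp add: split_def)
qed

lemma sum_prod_inj_le:
  assumes "finite E" and "inj_on (\<lambda>x. (q x, r x)) E" and "l1_le g G" and "l1_le h H"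
  shows "(\<Sum>x\<in>E. g (q x) * h (r x)) \<le> G * H"
proof -
  have nonneg: "0 \<le> g y" "0 \<le> h z" for y z using assms(3,4) by (auto simp: l1_le_def)
  have "(\<Sum>x\<in>E. g (q x) * h (r x)) = (\<Sum>y\<in>(\<lambda>x. (q x, r x)) ` E. g (fst y) * h (snd y))"
    by (simp add: sum.reindex[OF assms(2)])
  also have "\<dots> \<le> (\<Sum>y\<in>q ` E \<times> r ` E. g (fst y) * h (snd y))"
    using assms(1) nonneg by (intro sum_mono2) auto
  also have "\<dots> = sum g (q ` E) * sum h (r ` E)"
    by (simp add: sum.cartesian_product split_def sum_product)
  also have "\<dots> \<le> G * H"
    using assms nonneg by (intro mult_mono) (auto simp: l1_le_def intro!: sum_nonneg)
  finally show ?thesis .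
qed

lemma sum_prod3_inj_le:
  assumes "finite E" and "inj_on (\<lambda>x. (p x, q x, r x)) E"
    and "l1_le f F" and "l1_le g G" and "l1_le h H"
  shows "(\<Sum>x\<in>E. f (p x) * g (q x) * h (r x)) \<le> F * G * H"
proof -
  have nonneg: "0 \<le> f x" "0 \<le> g y" "0 \<le> h z" for x y z using assms(3-5) by (auto simp: l1_le_def)
  have "(\<Sum>x\<in>E. f (p x) * g (q x) * h (r x))
      = (\<Sum>y\<in>(\<lambda>x. (p x, q x, r x)) ` E. f (fst y) * g (fst (snd y)) * h (snd (snd y)))"
    by (simp add: sum.reindex[OF assms(2)])
  also have "\<dots> \<le> (\<Sum>y\<in>p ` E \<times> q ` E \<times> r ` E. f (fst y) * g (fst (snd y)) * h (snd (snd y)))"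
    using assms(1) nonneg by (intro sum_mono2) auto
  also have "\<dots> = sum f (p ` E) * sum g (q ` E) * sum h (r ` E)"
    by (rule sum_product3)
  also have "\<dots> \<le> F * G * H"
    using assms nonneg l1_le_bound_nonneg[OF assms(4)]
    by (intro mult_mono) (auto simp: l1_le_def intro!: sum_nonneg mult_nonneg_nonneg)
  finally show ?thesis .
qed

lemma weighted_Cauchy_Schwarz:
  fixes a y :: "'a \<Rightarrow> real"
  assumes "\<And>x. x \<in> S \<Longrightarrow> 0 \<le> y x"
  shows "(\<Sum>x\<in>S. a x * y x)\<^sup>2 \<le> (\<Sum>x\<in>S. (a x)\<^sup>2 * y x) * (\<Sum>x\<in>S. y x)"
proof -
  have "(\<Sum>x\<in>S. a x * y x) = (\<Sum>x\<in>S. (a x * sqrt (y x)) * sqrt (y x))"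
    using assms by (intro sum.cong) (auto simp: mult.assoc)
  also have "(\<dots>)\<^sup>2 \<le> (\<Sum>x\<in>S. (a x * sqrt (y x))\<^sup>2) * (\<Sum>x\<in>S. (sqrt (y x))\<^sup>2)"
    by (rule Cauchy_Schwarz_ineq_sum)
  also have "\<dots> = (\<Sum>x\<in>S. (a x)\<^sup>2 * y x) * (\<Sum>x\<in>S. y x)"
    using assms by (intro arg_cong2[where f="(*)"] sum.cong) (auto simp: power_mult_distrib)
  finally show ?thesis .
qed

lemma sum_prod_sq_le:
  assumes "finite F" and "inj_on (\<lambda>x. (q x, r x)) F" and "\<And>x. 0 \<le> f x" and g: "l1_le g G" and h: "l1_le h H"
  shows "(\<Sum>x\<in>F. f (p x) * g (q x) * h (r x))\<^sup>2 \<le> (\<Sum>x\<in>F. (f (p x))\<^sup>2 * (g (q x) * h (r x))) * (G * H)"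
proof -
  have nonneg: "0 \<le> g y" "0 \<le> h z" for y z using g h by (auto simp: l1_le_def)
  have "(\<Sum>x\<in>F. f (p x) * (g (q x) * h (r x)))\<^sup>2
      \<le> (\<Sum>x\<in>F. (f (p x))\<^sup>2 * (g (q x) * h (r x))) * (\<Sum>x\<in>F. g (q x) * h (r x))"
    using nonneg by (intro weighted_Cauchy_Schwarz) simp
  also have "\<dots> \<le> (\<Sum>x\<in>F. (f (p x))\<^sup>2 * (g (q x) * h (r x))) * (G * H)"
    using assms nonneg by (intro mult_left_mono sum_prod_inj_le[OF _ _ g h] sum_nonneg) auto
  finally show ?thesis by (simp add: mult.assoc)
qed

(* Young's inequality |f * g * h|_2 <= |f|_2 |g|_1 |h|_1, the convolution being written as a sum
   over the fibres of K. *)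
lemma l2_le_fibre_sums:
  fixes p q r K :: "'a \<Rightarrow> 'b" and f g h :: "'b \<Rightarrow> real"
  assumes E: "finite E" and f: "l2_le f A" and g: "l1_le g G" and h: "l1_le h H"
    and inj_fibre: "\<And>k. inj_on (\<lambda>x. (q x, r x)) {x. K x = k}"
    and inj: "inj (\<lambda>x. (p x, q x, r x))"
  shows "l2_le (\<lambda>k. \<Sum>x\<in>{x\<in>E. K x = k}. f (p x) * g (q x) * h (r x)) (A * G * H)"
proof -
  have nonneg: "0 \<le> f x" "0 \<le> g y" "0 \<le> h z" for x y z using f g h by (auto simp: l1_le_def l2_le_def)
  have GH: "0 \<le> G" "0 \<le> H" "0 \<le> A"
    using g h f by (auto intro: l1_le_bound_nonneg simp: l2_le_def)
  define \<phi> where "\<phi> x = (f (p x))\<^sup>2 * (g (q x) * h (r x))" for x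
  define fibre where "fibre k = {x\<in>E. K x = k}" for k
  have fibre_sq: "(\<Sum>x\<in>fibre k. f (p x) * g (q x) * h (r x))\<^sup>2 \<le> (\<Sum>x\<in>fibre k. \<phi> x) * (G * H)" for k
    unfolding \<phi>_def using E inj_on_subset[OF inj_fibre[of k], of "fibre k"] nonneg(1)
    by (intro sum_prod_sq_le g h) (auto simp: fibre_def)
  have total: "(\<Sum>k\<in>X. \<Sum>x\<in>fibre k. \<phi> x) \<le> A\<^sup>2 * G * H" if "finite X" for X
  proof -
    have "(\<Sum>k\<in>X. \<Sum>x\<in>fibre k. \<phi> x) = (\<Sum>k\<in>X. \<Sum>x\<in>{x \<in> {x\<in>E. K x \<in> X}. K x = k}. \<phi> x)"
      by (intro sum.cong) (auto simp: fibre_def)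
    also have "\<dots> = (\<Sum>x\<in>{x\<in>E. K x \<in> X}. \<phi> x)"
      using E that by (intro sum.group) auto
    also have "\<dots> \<le> (\<Sum>x\<in>E. \<phi> x)"
      using E nonneg by (intro sum_mono2) (auto simp: \<phi>_def)
    also have "\<dots> \<le> A\<^sup>2 * G * H"
      unfolding \<phi>_def mult.assoc[symmetric] using E inj_on_subset[OF inj]
      by (intro sum_prod3_inj_le l2_le_imp_l1_le_square f g h) auto
    finally show ?thesis .
  qed
  show ?thesis
    unfolding l2_le_def L2_set_def
  proof (intro conjI allI impI)
    fix X :: "'b set" assume X: "finite X"
    have "(\<Sum>k\<in>X. (\<Sum>x\<in>fibre k. f (p x) * g (q x) * h (r x))\<^sup>2) \<le> (\<Sum>k\<in>X. \<Sum>x\<in>fibre k. \<phi> x) * (G * H)"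
      using sum_mono[of X, OF fibre_sq] by (simp add: sum_distrib_right)
    also have "\<dots> \<le> (A * G * H)\<^sup>2"
      using mult_right_mono[OF total[OF X], of "G * H"] GH by (simp add: power2_eq_square mult_ac)
    finally show "sqrt (\<Sum>k\<in>X. (\<Sum>x\<in>{x\<in>E. K x = k}. f (p x) * g (q x) * h (r x))\<^sup>2) \<le> A * G * H"
      using GH by (intro real_le_lsqrt) (simp_all add: fibre_def)
  qed (use nonneg GH in \<open>auto intro!: sum_nonneg\<close>)
qed

(* The output frequency k of a triple (k1, k2, k3) under the resonance condition k + k1 = k2 + k3. *)
definition conv_index :: "int \<times> int \<times> int \<Rightarrow> int" where
  "conv_index x = fst (snd x) + snd (snd x) - fst x"

definition conv3 ::
    "(int \<times> int \<times> int) set \<Rightarrow> (int \<Rightarrow> real) \<Rightarrow> (int \<Rightarrow> real) \<Rightarrow> (int \<Rightarrow> real) \<Rightarrow> int \<Rightarrow> real"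
where
  "conv3 E f g h k = (\<Sum>x\<in>{x\<in>E. conv_index x = k}. f (fst x) * g (fst (snd x)) * h (snd (snd x)))"

lemma l2_le_conv3_1:
  assumes "finite E" and "l2_le f A" and "l1_le g G" and "l1_le h H"
  shows "l2_le (conv3 E f g h) (A * G * H)"
  unfolding conv3_def
  by (rule l2_le_fibre_sums[OF assms, of "\<lambda>x. fst (snd x)" "\<lambda>x. snd (snd x)" conv_index fst])
    (auto simp: inj_on_def conv_index_def prod_eq_iff)

lemma l2_le_conv3_2:
  assumes "finite E" and "l1_le f G" and "l2_le g A" and "l1_le h H"
  shows "l2_le (conv3 E f g h) (G * A * H)"
  using l2_le_fibre_sums[OF assms(1,3,2,4), of fst "\<lambda>x. snd (snd x)" conv_index "\<lambda>x. fst (snd x)"]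
  unfolding conv3_def[abs_def] by (auto simp: inj_on_def conv_index_def prod_eq_iff mult_ac)

lemma l2_le_conv3_3:
  assumes "finite E" and "l1_le f G" and "l1_le g H" and "l2_le h A"
  shows "l2_le (conv3 E f g h) (G * H * A)"
  using l2_le_fibre_sums[OF assms(1,4,2,3), of fst "\<lambda>x. fst (snd x)" conv_index "\<lambda>x. snd (snd x)"]
  unfolding conv3_def[abs_def] by (auto simp: inj_on_def conv_index_def prod_eq_iff mult_ac)

lemma conv3_nonneg:
  "(\<And>x. 0 \<le> f x) \<Longrightarrow> (\<And>x. 0 \<le> g x) \<Longrightarrow> (\<And>x. 0 \<le> h x) \<Longrightarrow> 0 \<le> conv3 E f g h k"
  unfolding conv3_def by (intro sum_nonneg mult_nonneg_nonneg) auto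

lemma conv3_cmult:
  shows "c * conv3 E f g h k = conv3 E (\<lambda>x. c * f x) g h k"
    and "c * conv3 E f g h k = conv3 E f (\<lambda>x. c * g x) h k"
    and "c * conv3 E f g h k = conv3 E f g (\<lambda>x. c * h x) k"
  unfolding conv3_def by (simp_all add: sum_distrib_left mult_ac)

lemma conv3_weight_le:
  assumes "\<And>x. 0 \<le> f x" and "\<And>x. 0 \<le> g x" and "\<And>x. 0 \<le> h x"
    and \<rho>: "\<And>x. \<rho> (conv_index x) \<le> M * (\<rho> (fst x) + \<rho> (fst (snd x)) + \<rho> (snd (snd x)))"
  shows "\<rho> k * conv3 E f g h k \<le> M * (conv3 E (\<lambda>k. \<rho> k * f k) g h k
    + conv3 E f (\<lambda>k. \<rho> k * g k) h k + conv3 E f g (\<lambda>k. \<rho> k * h k) k)"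
proof -
  have "\<rho> k * conv3 E f g h k = (\<Sum>x\<in>{x\<in>E. conv_index x = k}.
      \<rho> (conv_index x) * (f (fst x) * g (fst (snd x)) * h (snd (snd x))))"
    unfolding conv3_def by (simp add: sum_distrib_left)
  also have "\<dots> \<le> (\<Sum>x\<in>{x\<in>E. conv_index x = k}.
      M * (\<rho> (fst x) + \<rho> (fst (snd x)) + \<rho> (snd (snd x))) * (f (fst x) * g (fst (snd x)) * h (snd (snd x))))"
    using assms by (intro sum_mono mult_right_mono) auto
  also have "\<dots> = M * (conv3 E (\<lambda>k. \<rho> k * f k) g h k
      + conv3 E f (\<lambda>k. \<rho> k * g k) h k + conv3 E f g (\<lambda>k. \<rho> k * h k) k)"
    unfolding conv3_def by (simp add: sum_distrib_left sum.distrib algebra_simps)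
  finally show ?thesis .
qed

lemma l2_le_weighted_conv3:
  assumes E: "finite E" and "0 \<le> M" and "\<And>k. 0 \<le> \<rho> k"
    and \<rho>: "\<And>x. \<rho> (conv_index x) \<le> M * (\<rho> (fst x) + \<rho> (fst (snd x)) + \<rho> (snd (snd x)))"
    and f: "l1_le f F1" "l2_le (\<lambda>k. \<rho> k * f k) F2"
    and g: "l1_le g G1" "l2_le (\<lambda>k. \<rho> k * g k) G2"
    and h: "l1_le h H1" "l2_le (\<lambda>k. \<rho> k * h k) H2"
  shows "l2_le (\<lambda>k. \<rho> k * conv3 E f g h k) (M * (F2 * G1 * H1 + F1 * G2 * H1 + F1 * G1 * H2))"
proof (rule l2_le_dominated)
  have nonneg: "0 \<le> f x" "0 \<le> g x" "0 \<le> h x" for x using f g h by (auto simp: l1_le_def)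
  show "l2_le (\<lambda>k. M * (conv3 E (\<lambda>k. \<rho> k * f k) g h k + conv3 E f (\<lambda>k. \<rho> k * g k) h k
      + conv3 E f g (\<lambda>k. \<rho> k * h k) k)) (M * (F2 * G1 * H1 + F1 * G2 * H1 + F1 * G1 * H2))"
    by (intro l2_le_cmult l2_le_add l2_le_conv3_1 l2_le_conv3_2 l2_le_conv3_3 E f g h \<open>0 \<le> M\<close>)
  show "\<rho> k * conv3 E f g h k \<le> M * (conv3 E (\<lambda>k. \<rho> k * f k) g h k
      + conv3 E f (\<lambda>k. \<rho> k * g k) h k + conv3 E f g (\<lambda>k. \<rho> k * h k) k)" for k
    by (rule conv3_weight_le[OF nonneg \<rho>])
  show "0 \<le> \<rho> k * conv3 E f g h k" for k
    using assms(3) nonneg by (simp add: conv3_nonneg)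
qed simp

(* For a = |w - z|, u = |w|, v = |z| this majorizes the difference of the cubic terms of w and z. *)
definition cubic_majorant ::
    "(int \<times> int \<times> int) set \<Rightarrow> (int \<Rightarrow> real) \<Rightarrow> (int \<Rightarrow> real) \<Rightarrow> (int \<Rightarrow> real) \<Rightarrow> int \<Rightarrow> real"
where
  "cubic_majorant E a u v k = conv3 E a u u k + conv3 E v a u k + conv3 E v v a k"

lemma l2_le_weighted_cubic_majorant:
  assumes E: "finite E" and M: "0 \<le> M" and K: "1 \<le> K" and "\<And>k. 0 \<le> \<rho> k"
    and \<rho>: "\<And>x. \<rho> (conv_index x) \<le> M * (\<rho> (fst x) + \<rho> (fst (snd x)) + \<rho> (snd (snd x)))"
    and a: "l1_le a (K * Na)" "l2_le (\<lambda>k. \<rho> k * a k) Na"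
    and u: "l1_le u Q" "l2_le (\<lambda>k. \<rho> k * u k) Q"
    and v: "l1_le v Q" "l2_le (\<lambda>k. \<rho> k * v k) Q"
  shows "l2_le (\<lambda>k. \<rho> k * cubic_majorant E a u v k) (9 * M * K * Na * Q\<^sup>2)"
proof (rule l2_le_dominated)
  have nonneg: "0 \<le> a x" "0 \<le> u x" "0 \<le> v x" for x using a u v by (auto simp: l1_le_def)
  have "l2_le (\<lambda>k. \<rho> k * conv3 E a u u k) (M * (Na * Q * Q + K * Na * Q * Q + K * Na * Q * Q))"
    by (rule l2_le_weighted_conv3[OF E M assms(4) \<rho> a u u])
  moreover have "l2_le (\<lambda>k. \<rho> k * conv3 E v a u k) (M * (Q * (K * Na) * Q + Q * Na * Q + Q * (K * Na) * Q))"
    by (rule l2_le_weighted_conv3[OF E M assms(4) \<rho> v a u])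
  moreover have "l2_le (\<lambda>k. \<rho> k * conv3 E v v a k) (M * (Q * Q * (K * Na) + Q * Q * (K * Na) + Q * Q * Na))"
    by (rule l2_le_weighted_conv3[OF E M assms(4) \<rho> v v a])
  ultimately show "l2_le (\<lambda>k. \<rho> k * conv3 E a u u k + \<rho> k * conv3 E v a u k + \<rho> k * conv3 E v v a k)
      (M * (Na * Q * Q + K * Na * Q * Q + K * Na * Q * Q) + M * (Q * (K * Na) * Q + Q * Na * Q + Q * (K * Na) * Q)
       + M * (Q * Q * (K * Na) + Q * Q * (K * Na) + Q * Q * Na))"
    by (intro l2_le_add)
  show "\<rho> k * cubic_majorant E a u v k \<le> \<rho> k * conv3 E a u u k + \<rho> k * conv3 E v a u k + \<rho> k * conv3 E v v a k" for k
    by (simp add: cubic_majorant_def algebra_simps)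
  show "0 \<le> \<rho> k * cubic_majorant E a u v k" for k
    using assms(4) nonneg by (simp add: cubic_majorant_def conv3_nonneg)
  have "0 \<le> M * (Na * Q * Q)" using a u M by (auto simp: l2_le_def)
  then have "3 * (M * (Na * Q * Q)) \<le> 3 * (K * (M * (Na * Q * Q)))"
    using K by (intro mult_left_mono) (auto simp: mult_le_cancel_right1)
  then show "M * (Na * Q * Q + K * Na * Q * Q + K * Na * Q * Q) + M * (Q * (K * Na) * Q + Q * Na * Q + Q * (K * Na) * Q)
       + M * (Q * Q * (K * Na) + Q * Q * (K * Na) + Q * Q * Na) \<le> 9 * M * K * Na * Q\<^sup>2"
    by (simp add: algebra_simps power2_eq_square)
qed

lemma l2_le_const_weight_cubic_majorant:
  assumes E: "finite E" and "0 \<le> c"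
    and a: "l2_le (\<lambda>k. c * a k) Na" "\<And>k. 0 \<le> a k" and u: "l1_le u Q" and v: "l1_le v Q"
  shows "l2_le (\<lambda>k. c * cubic_majorant E a u v k) (3 * Na * Q\<^sup>2)"
proof (rule l2_le_dominated)
  have nonneg: "0 \<le> u x" "0 \<le> v x" for x using u v by (auto simp: l1_le_def)
  show "l2_le (\<lambda>k. conv3 E (\<lambda>k. c * a k) u u k + conv3 E v (\<lambda>k. c * a k) u k + conv3 E v v (\<lambda>k. c * a k) k)
      (Na * Q * Q + Q * Na * Q + Q * Q * Na)"
    by (intro l2_le_add l2_le_conv3_1 l2_le_conv3_2 l2_le_conv3_3 E a u v)
  show "c * cubic_majorant E a u v k \<le> conv3 E (\<lambda>k. c * a k) u u k + conv3 E v (\<lambda>k. c * a k) u k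
      + conv3 E v v (\<lambda>k. c * a k) k" for k
    by (simp add: cubic_majorant_def distrib_left conv3_cmult(1)[of c E a] conv3_cmult(2)[of c E v a]
        conv3_cmult(3)[of c E v v a])
  show "0 \<le> c * cubic_majorant E a u v k" for k
    using assms(2) a(2) nonneg by (simp add: cubic_majorant_def conv3_nonneg)
qed (simp add: power2_eq_square)

section \<open>The weighted cubic estimate\<close>

lemma sobolev_weight_conv_index_le:
  "sobolev_weight (real s) (conv_index x)
    \<le> 9 ^ s * (sobolev_weight (real s) (fst x) + sobolev_weight (real s) (fst (snd x)) + sobolev_weight (real s) (snd (snd x)))"
proof -
  obtain a b c where x: "x = (a, b, c)" by (metis prod.exhaust)
  define m where "m = max \<bar>real_of_int a\<bar> (max \<bar>real_of_int b\<bar> \<bar>real_of_int c\<bar>)"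
  have "\<bar>real_of_int (conv_index x)\<bar> \<le> 3 * m"
    unfolding x conv_index_def m_def by simp
  then have "\<bar>real_of_int (conv_index x)\<bar> ^ (2 * s) \<le> (3 * m) ^ (2 * s)"
    by (rule power_mono) simp
  also have "\<dots> = 9 ^ s * m ^ (2 * s)"
    by (simp add: power_mult_distrib power_mult)
  also have "\<dots> \<le> 9 ^ s * (\<bar>real_of_int a\<bar> ^ (2 * s) + \<bar>real_of_int b\<bar> ^ (2 * s) + \<bar>real_of_int c\<bar> ^ (2 * s))"
    unfolding m_def by (intro mult_left_mono) (auto simp: max_def)
  finally have "\<bar>real_of_int (conv_index x)\<bar> ^ (2 * s)
      \<le> 9 ^ s * (\<bar>real_of_int a\<bar> ^ (2 * s) + \<bar>real_of_int b\<bar> ^ (2 * s) + \<bar>real_of_int c\<bar> ^ (2 * s))" .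
  moreover have "(1::real) \<le> 9 ^ s" by simp
  ultimately show ?thesis unfolding sobolev_weight_of_nat x distrib_left by (simp del: one_le_power)
qed

lemma sqrt_sobolev_weight_conv_index_le:
  "sqrt (sobolev_weight (real s) (conv_index x))
    \<le> 3 ^ s * (sqrt (sobolev_weight (real s) (fst x)) + sqrt (sobolev_weight (real s) (fst (snd x)))
      + sqrt (sobolev_weight (real s) (snd (snd x))))"
proof -
  define A B C where "A = sobolev_weight (real s) (fst x)" and "B = sobolev_weight (real s) (fst (snd x))"
    and "C = sobolev_weight (real s) (snd (snd x))"
  have nonneg: "0 \<le> A" "0 \<le> B" "0 \<le> C"
    unfolding A_def B_def C_def by (simp_all add: sobolev_weight_pos less_imp_le)
  have "sqrt (sobolev_weight (real s) (conv_index x)) \<le> sqrt (9 ^ s) * sqrt (A + B + C)"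
    unfolding A_def B_def C_def real_sqrt_mult[symmetric] by (rule real_sqrt_le_mono[OF sobolev_weight_conv_index_le])
  also have "\<dots> \<le> 3 ^ s * (sqrt A + sqrt B + sqrt C)"
  proof (rule mult_mono)
    show "sqrt (9 ^ s) \<le> (3::real) ^ s"
      by (simp add: real_sqrt_power)
    show "sqrt (A + B + C) \<le> sqrt A + sqrt B + sqrt C"
      using nonneg order_trans[OF sqrt_add_le_add_sqrt add_right_mono[OF sqrt_add_le_add_sqrt]]
      by simp
  qed (use nonneg in auto)
  finally show ?thesis unfolding A_def B_def C_def .
qed

definition kappa :: "nat \<Rightarrow> real \<Rightarrow> real" where
  "kappa s \<gamma> = 2 + l1_embedding_const (real s + \<gamma>) + l1_embedding_const (real s)"

lemma kappa_ge:
  shows "1 \<le> kappa s \<gamma>" and "sqrt 2 \<le> kappa s \<gamma>"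
    and "l1_embedding_const (real s + \<gamma>) \<le> kappa s \<gamma>" and "l1_embedding_const (real s) \<le> kappa s \<gamma>"
  using l1_embedding_const_nonneg[of "real s + \<gamma>"] l1_embedding_const_nonneg[of "real s"] sqrt2_less_2
  by (simp_all add: kappa_def)

lemma l1_l2_le_of_kappa_hs_norm_le:
  fixes s :: nat
  assumes "0 \<le> \<gamma>" and "real s + \<gamma> > 1/2" and f: "hs_summable (real s + \<gamma>) f"
    and Q: "kappa s \<gamma> * hs_norm (real s + \<gamma>) f \<le> Q"
  shows "l1_le (\<lambda>k. cmod (f k)) Q" and "l2_le (\<lambda>k. sqrt (sobolev_weight (real s) k) * cmod (f k)) Q"
proof -
  have "l1_embedding_const (real s + \<gamma>) * hs_norm (real s + \<gamma>) f \<le> Q"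
    using mult_right_mono[OF kappa_ge(3) hs_norm_nonneg] Q by (rule order_trans)
  then show "l1_le (\<lambda>k. cmod (f k)) Q"
    using l1_le_hs_norm[OF assms(2) f] by (rule l1_le_mono[rotated])
  have "sqrt 2 * hs_norm (real s + \<gamma>) f \<le> Q"
    using mult_right_mono[OF kappa_ge(2) hs_norm_nonneg] Q by (rule order_trans)
  then show "l2_le (\<lambda>k. sqrt (sobolev_weight (real s) k) * cmod (f k)) Q"
    using l2_le_hs_norm_mono[OF _ f, of "real s"] assms(1) by (auto intro: l2_le_mono)
qed

lemma l2_le_cubic_majorant:
  fixes s :: nat
  assumes \<gamma>: "0 \<le> \<gamma>" and s\<gamma>: "real s + \<gamma> > 1/2" and E: "finite E"
    and w: "hs_summable (real s + \<gamma>) w" and z: "hs_summable (real s + \<gamma>) z"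
  defines "\<kappa> \<equiv> kappa s \<gamma>" and "Na \<equiv> hs_norm (real s) (w - z)"
    and "Q \<equiv> kappa s \<gamma> * (1 + hs_norm (real s + \<gamma>) w + hs_norm (real s + \<gamma>) z)"
  shows "l2_le (\<lambda>k. sqrt (sobolev_weight (real s) k)
      * cubic_majorant E (\<lambda>k. cmod (w k - z k)) (\<lambda>k. cmod (w k)) (\<lambda>k. cmod (z k)) k)
    (9 * 3 ^ s * \<kappa> * Na * Q\<^sup>2)"
proof -
  define \<rho> where "\<rho> k = sqrt (sobolev_weight (real s) k)" for k
  have "\<kappa> * hs_norm (real s + \<gamma>) w \<le> Q" "\<kappa> * hs_norm (real s + \<gamma>) z \<le> Q"
    using kappa_ge(1)[of s \<gamma>] hs_norm_nonneg[of "real s + \<gamma>" w] hs_norm_nonneg[of "real s + \<gamma>" z]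
    by (simp_all add: Q_def \<kappa>_def algebra_simps)
  note uv = l1_l2_le_of_kappa_hs_norm_le[OF \<gamma> s\<gamma> w this(1)[unfolded \<kappa>_def], folded \<rho>_def]
    l1_l2_le_of_kappa_hs_norm_le[OF \<gamma> s\<gamma> z this(2)[unfolded \<kappa>_def], folded \<rho>_def]
  have wz: "hs_summable (real s) (w - z)"
    by (rule hs_summable_mono[OF _ hs_summable_diff[OF w z]]) (use \<gamma> in simp)
  have a: "l2_le (\<lambda>k. \<rho> k * cmod (w k - z k)) Na"
    using l2_le_hs_norm[OF wz] by (simp add: \<rho>_def Na_def)
  show ?thesis
  proof (cases "s = 0")
    case True
    \<comment> \<open>The weight is constant and stays on \<open>w - z\<close>, whose \<open>\<ell>\<^sup>1\<close> norm is not controlled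
      when \<open>s = 0\<close>.\<close>
    then have \<rho>_const: "\<rho> = (\<lambda>k. sqrt 2)" by (simp add: \<rho>_def sobolev_weight_def hs_weight_def fun_eq_iff)
    have "l2_le (\<lambda>k. \<rho> k * cubic_majorant E (\<lambda>k. cmod (w k - z k)) (\<lambda>k. cmod (w k)) (\<lambda>k. cmod (z k)) k)
        (3 * Na * Q\<^sup>2)"
      unfolding \<rho>_const using a[unfolded \<rho>_const] uv(1,3)
      by (intro l2_le_const_weight_cubic_majorant E) auto
    moreover have "3 * Na * Q\<^sup>2 \<le> 9 * 3 ^ s * \<kappa> * Na * Q\<^sup>2"
      using mult_right_mono[of 3 "9 * 3 ^ s * \<kappa>" "Na * Q\<^sup>2"] True kappa_ge(1)[of s \<gamma>]
        hs_norm_nonneg[of "real s" "w - z"]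
      by (simp add: Na_def \<kappa>_def mult.assoc)
    ultimately show ?thesis unfolding \<rho>_def by (rule l2_le_mono)
  next
    case False
    have "l1_le (\<lambda>k. cmod (w k - z k)) (kappa s \<gamma> * Na)"
      using l1_le_hs_norm[OF _ wz] False mult_right_mono[OF kappa_ge(4) hs_norm_nonneg]
      by (auto simp: Na_def intro: l1_le_mono)
    then show ?thesis
      unfolding \<kappa>_def \<rho>_def[symmetric] using a uv
      by (intro l2_le_weighted_cubic_majorant[OF E _ kappa_ge(1)])
        (auto simp: \<rho>_def sqrt_sobolev_weight_conv_index_le sobolev_weight_pos less_imp_le)
  qed
qed

section \<open>The one-step map\<close>

lemma tendsto_sum_Int_finite_subsets:
  assumes "(g has_sum S) A"
  shows "((\<lambda>E. \<Sum>x\<in>E \<inter> A. g x) \<longlongrightarrow> S) (finite_subsets_at_top UNIV)"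
proof -
  have "((\<lambda>x. if x \<in> A then g x else 0) has_sum S) UNIV"
    using assms by (subst has_sum_cong_neutral[where T = A and g = g]) auto
  then have "(sum (\<lambda>x. if x \<in> A then g x else 0) \<longlongrightarrow> S) (finite_subsets_at_top UNIV)"
    by (simp add: has_sum_def)
  then show ?thesis
    by (rule tendsto_cong[THEN iffD1, rotated]) (auto simp: sum.inter_restrict)
qed

lemma norm_I_int_le:
  assumes "0 \<le> \<tau>"
  shows "cmod (I_int \<delta> R b tn \<tau> m) \<le> \<tau>"
proof (cases "(\<lambda>s. cis (2 * m * (interpB \<delta> R b (tn + s) - interpB \<delta> R b tn))) integrable_on {0..\<tau>}")
  case True
  then have "((\<lambda>s. cis (2 * m * (interpB \<delta> R b (tn + s) - interpB \<delta> R b tn))) has_integral I_int \<delta> R b tn \<tau> m)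
      (cbox 0 \<tau>)"
    by (simp add: I_int_def integrable_integral)
  then have "cmod (I_int \<delta> R b tn \<tau> m) \<le> 1 * Henstock_Kurzweil_Integration.content (cbox 0 \<tau>)"
    by (rule has_integral_bound[rotated]) auto
  then show ?thesis using assms by simp
next
  case False
  then show ?thesis using assms by (simp add: I_int_def not_integrable_integral)
qed

definition resonant_set :: "enat \<Rightarrow> int \<Rightarrow> (int \<times> int \<times> int) set" where
  "resonant_set N k = {(k1, k2, k3). k + k1 = k2 + k3 \<and> inN N k1 \<and> inN N k2 \<and> inN N k3}"

definition cubic_term ::
    "(int \<times> int \<times> int \<Rightarrow> complex) \<Rightarrow> (int \<Rightarrow> complex) \<Rightarrow> int \<times> int \<times> int \<Rightarrow> complex"
where
  "cubic_term I f x = I x * cnj (f (fst x)) * f (fst (snd x)) * f (snd (snd x))"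

(* Phi with the phase factor c and the integrals I left abstract: only |c| = 1 and |I| <= tau matter. *)
definition cubic_step :: "(int \<Rightarrow> complex) \<Rightarrow> (int \<times> int \<times> int \<Rightarrow> complex) \<Rightarrow> real \<Rightarrow> enat
    \<Rightarrow> (int \<Rightarrow> complex) \<Rightarrow> int \<Rightarrow> complex" where
  "cubic_step c I lam N f k = (if inN N k then
      c k * (f k + \<i> * complex_of_real lam * (\<Sum>\<^sub>\<infinity>x\<in>resonant_set N k. cubic_term I f x)) else 0)"

lemma Phi_eq_cubic_step:
  "Phi \<delta> R b lam N tn \<tau> = cubic_step (\<lambda>k. cis (- (interpB \<delta> R b (tn + \<tau>) - interpB \<delta> R b tn) * (of_int k)\<^sup>2))
      (\<lambda>x. I_int \<delta> R b tn \<tau> ((of_int (fst x))\<^sup>2)) lam N"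
  by (simp add: fun_eq_iff Phi_def cubic_step_def resonant_set_def cubic_term_def split_def)

lemma summable_on_cubic_term:
  assumes "\<And>x. cmod (I x) \<le> C" and f: "l1_le (\<lambda>k. cmod (f k)) G"
  shows "cubic_term I f summable_on A"
proof (rule abs_summable_summable)
  have "(\<lambda>x. C * (cmod (f (fst x)) * cmod (f (fst (snd x))) * cmod (f (snd (snd x))))) summable_on A"
  proof (intro summable_on_cmult_right nonneg_bdd_above_summable_on bdd_aboveI2)
    show "(\<Sum>x\<in>E. cmod (f (fst x)) * cmod (f (fst (snd x))) * cmod (f (snd (snd x)))) \<le> G * G * G"
      if "E \<in> {E. E \<subseteq> A \<and> finite E}" for E
      by (rule sum_prod3_inj_le[OF _ _ f f f]) (use that in \<open>auto simp: inj_on_def prod_eq_iff\<close>)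
  qed simp
  then show "(\<lambda>x. norm (cubic_term I f x)) summable_on A"
  proof (rule summable_on_comparison_test)
    show "norm (cubic_term I f x) \<le> C * (cmod (f (fst x)) * cmod (f (fst (snd x))) * cmod (f (snd (snd x))))" for x
      unfolding cubic_term_def norm_mult complex_mod_cnj using assms(1)[of x]
      by (simp add: mult.assoc mult_right_mono)
  qed simp
qed

lemma tendsto_sum_cubic_term_diff:
  assumes "\<And>x. cmod (I x) \<le> C" and "l1_le (\<lambda>k. cmod (w k)) G" and "l1_le (\<lambda>k. cmod (z k)) H"
  shows "((\<lambda>E. \<Sum>x\<in>E \<inter> A. cubic_term I w x - cubic_term I z x)
    \<longlongrightarrow> (\<Sum>\<^sub>\<infinity>x\<in>A. cubic_term I w x) - (\<Sum>\<^sub>\<infinity>x\<in>A. cubic_term I z x)) (finite_subsets_at_top UNIV)"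
proof -
  have "((\<lambda>x. cubic_term I w x + - cubic_term I z x) has_sum
      (\<Sum>\<^sub>\<infinity>x\<in>A. cubic_term I w x) + - (\<Sum>\<^sub>\<infinity>x\<in>A. cubic_term I z x)) A"
    using assms by (intro has_sum_add has_sum_uminusI has_sum_infsum summable_on_cubic_term)
  then show ?thesis by (simp add: tendsto_sum_Int_finite_subsets)
qed

lemma tendsto_cubic_step_diff:
  assumes "\<And>x. cmod (I x) \<le> C" and "l1_le (\<lambda>k. cmod (w k)) G" and "l1_le (\<lambda>k. cmod (z k)) H"
  shows "((\<lambda>E. if inN N k then c k * (w k - z k + \<i> * complex_of_real lam *
      (\<Sum>x\<in>E \<inter> resonant_set N k. cubic_term I w x - cubic_term I z x)) else 0)
    \<longlongrightarrow> (cubic_step c I lam N w - cubic_step c I lam N z) k) (finite_subsets_at_top UNIV)"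
proof -
  let ?S = "(\<Sum>\<^sub>\<infinity>x\<in>resonant_set N k. cubic_term I w x) - (\<Sum>\<^sub>\<infinity>x\<in>resonant_set N k. cubic_term I z x)"
  have "((\<lambda>E. if inN N k then c k * (w k - z k + \<i> * complex_of_real lam *
      (\<Sum>x\<in>E \<inter> resonant_set N k. cubic_term I w x - cubic_term I z x)) else 0)
    \<longlongrightarrow> (if inN N k then c k * (w k - z k + \<i> * complex_of_real lam * ?S) else 0)) (finite_subsets_at_top UNIV)"
    using tendsto_sum_cubic_term_diff[OF assms] by (cases "inN N k") (simp_all add: tendsto_intros)
  moreover have "(if inN N k then c k * (w k - z k + \<i> * complex_of_real lam * ?S) else 0)
      = (cubic_step c I lam N w - cubic_step c I lam N z) k"
    by (simp add: cubic_step_def algebra_simps)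
  ultimately show ?thesis by simp
qed

lemma norm_cubic_term_diff_le:
  "cmod (cubic_term I w x - cubic_term I z x) \<le> cmod (I x) *
    (cmod (w (fst x) - z (fst x)) * cmod (w (fst (snd x))) * cmod (w (snd (snd x)))
     + cmod (z (fst x)) * cmod (w (fst (snd x)) - z (fst (snd x))) * cmod (w (snd (snd x)))
     + cmod (z (fst x)) * cmod (z (fst (snd x))) * cmod (w (snd (snd x)) - z (snd (snd x))))"
proof -
  obtain a b c where x: "x = (a, b, c)" by (metis prod.exhaust)
  have "cubic_term I w x - cubic_term I z x = I x * (cnj (w a - z a) * w b * w c
      + cnj (z a) * (w b - z b) * w c + cnj (z a) * z b * (w c - z c))"
    by (simp add: cubic_term_def x algebra_simps)
  also have "cmod \<dots> \<le> cmod (I x) * (cmod (cnj (w a - z a) * w b * w c)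
      + cmod (cnj (z a) * (w b - z b) * w c) + cmod (cnj (z a) * z b * (w c - z c)))"
    unfolding norm_mult[of "I x"] by (intro mult_left_mono order_trans[OF norm_triangle_ineq] add_mono) auto
  finally show ?thesis by (simp add: x norm_mult flip: complex_cnj_diff)
qed

lemma norm_sum_cubic_term_diff_le:
  assumes "\<And>x. cmod (I x) \<le> \<tau>" and "finite E"
  shows "cmod (\<Sum>x\<in>E \<inter> resonant_set N k. cubic_term I w x - cubic_term I z x)
    \<le> \<tau> * cubic_majorant E (\<lambda>k. cmod (w k - z k)) (\<lambda>k. cmod (w k)) (\<lambda>k. cmod (z k)) k"
proof -
  define m where "m x = cmod (w (fst x) - z (fst x)) * cmod (w (fst (snd x))) * cmod (w (snd (snd x)))
     + cmod (z (fst x)) * cmod (w (fst (snd x)) - z (fst (snd x))) * cmod (w (snd (snd x)))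
     + cmod (z (fst x)) * cmod (z (fst (snd x))) * cmod (w (snd (snd x)) - z (snd (snd x)))" for x
  have m: "0 \<le> m x" for x by (simp add: m_def)
  have "cmod (\<Sum>x\<in>E \<inter> resonant_set N k. cubic_term I w x - cubic_term I z x)
      \<le> (\<Sum>x\<in>E \<inter> resonant_set N k. cmod (cubic_term I w x - cubic_term I z x))"
    by (rule norm_sum)
  also have "\<dots> \<le> (\<Sum>x\<in>E \<inter> resonant_set N k. \<tau> * m x)"
  proof (rule sum_mono)
    fix x
    have "cmod (cubic_term I w x - cubic_term I z x) \<le> cmod (I x) * m x"
      unfolding m_def by (rule norm_cubic_term_diff_le)
    also have "\<dots> \<le> \<tau> * m x"
      using assms(1) m by (rule mult_right_mono)
    finally show "cmod (cubic_term I w x - cubic_term I z x) \<le> \<tau> * m x" .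
  qed
  also have "\<dots> \<le> (\<Sum>x\<in>{x\<in>E. conv_index x = k}. \<tau> * m x)"
  proof (rule sum_mono2)
    show "E \<inter> resonant_set N k \<subseteq> {x \<in> E. conv_index x = k}"
      by (auto simp: resonant_set_def conv_index_def)
    show "0 \<le> \<tau> * m x" for x
      using order_trans[OF norm_ge_zero assms(1)] m by simp
  qed (use assms(2) in simp)
  also have "\<dots> = \<tau> * (\<Sum>x\<in>{x\<in>E. conv_index x = k}. m x)"
    by (simp add: sum_distrib_left)
  also have "\<dots> = \<tau> * cubic_majorant E (\<lambda>k. cmod (w k - z k)) (\<lambda>k. cmod (w k)) (\<lambda>k. cmod (z k)) k"
    unfolding cubic_majorant_def conv3_def m_def sum.distrib ..
  finally show ?thesis .
qed

definition lipschitz_const :: "nat \<Rightarrow> real \<Rightarrow> real \<Rightarrow> real \<Rightarrow> real \<Rightarrow> real" where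
  "lipschitz_const s \<gamma> lam x y = \<bar>lam\<bar> * 9 * 3 ^ s * kappa s \<gamma> ^ 3 * (1 + x + y)\<^sup>2"

lemma lipschitz_const_nonneg: "0 \<le> lipschitz_const s \<gamma> lam x y"
  using l1_embedding_const_nonneg[of "real s + \<gamma>"] l1_embedding_const_nonneg[of "real s"]
  by (simp add: lipschitz_const_def kappa_def)

lemma lipschitz_const_strict_mono:
  assumes "lam \<noteq> 0" and "0 \<le> x" and "0 \<le> y" and "x + y < x' + y'"
  shows "lipschitz_const s \<gamma> lam x y < lipschitz_const s \<gamma> lam x' y'"
proof -
  have "0 < kappa s \<gamma>"
    using kappa_ge(1)[of s \<gamma>] by simp
  then show ?thesis
    unfolding lipschitz_const_def using assms by (intro mult_strict_left_mono power_strict_mono) auto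
qed

lemma hs_norm_cubic_step_diff_le:
  fixes s :: nat
  assumes \<gamma>: "0 \<le> \<gamma>" and s\<gamma>: "real s + \<gamma> > 1/2"
    and c: "\<And>k. cmod (c k) = 1" and I: "\<And>x. cmod (I x) \<le> \<tau>"
    and w: "hs_summable (real s + \<gamma>) w" and z: "hs_summable (real s + \<gamma>) z"
  shows "hs_norm (real s) (cubic_step c I lam N w - cubic_step c I lam N z)
    \<le> (1 + \<tau> * lipschitz_const s \<gamma> lam (hs_norm (real s + \<gamma>) w) (hs_norm (real s + \<gamma>) z)) * hs_norm (real s) (w - z)"
proof -
  define \<rho> where "\<rho> k = sqrt (sobolev_weight (real s) k)" for k
  define S where "S E k = (\<Sum>x\<in>E \<inter> resonant_set N k. cubic_term I w x - cubic_term I z x)" for E k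
  define D where "D E k = (if inN N k then c k * (w k - z k + \<i> * complex_of_real lam * S E k) else 0)" for E k
  define maj where "maj E = cubic_majorant E (\<lambda>k. cmod (w k - z k)) (\<lambda>k. cmod (w k)) (\<lambda>k. cmod (z k))" for E
  define Na where "Na = hs_norm (real s) (w - z)"
  define B where "B = (1 + \<tau> * lipschitz_const s \<gamma> lam (hs_norm (real s + \<gamma>) w) (hs_norm (real s + \<gamma>) z)) * Na"
  have \<tau>: "0 \<le> \<tau>" using order_trans[OF norm_ge_zero I] .
  have "((\<lambda>E. D E k) \<longlongrightarrow> (cubic_step c I lam N w - cubic_step c I lam N z) k) (finite_subsets_at_top UNIV)" for k
    unfolding D_def S_def by (rule tendsto_cubic_step_diff[OF I l1_le_hs_norm[OF s\<gamma> w] l1_le_hs_norm[OF s\<gamma> z]])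
  moreover have "l2_le (\<lambda>k. \<rho> k * cmod (D E k)) B" if E: "finite E" for E
  proof (rule l2_le_dominated)
    show "l2_le (\<lambda>k. \<rho> k * cmod (w k - z k) + (\<bar>lam\<bar> * \<tau>) * (\<rho> k * maj E k))
        (Na + (\<bar>lam\<bar> * \<tau>) * (9 * 3 ^ s * kappa s \<gamma> * Na
          * (kappa s \<gamma> * (1 + hs_norm (real s + \<gamma>) w + hs_norm (real s + \<gamma>) z))\<^sup>2))"
      using \<tau> l2_le_hs_norm[OF hs_summable_mono[OF _ hs_summable_diff[OF w z]], of "real s"] \<gamma>
      by (intro l2_le_add l2_le_cmult) (auto simp: \<rho>_def maj_def Na_def l2_le_cubic_majorant[OF \<gamma> s\<gamma> E w z])
    show "\<rho> k * cmod (D E k) \<le> \<rho> k * cmod (w k - z k) + (\<bar>lam\<bar> * \<tau>) * (\<rho> k * maj E k)" for k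
    proof -
      have "cmod (D E k) \<le> cmod (w k - z k) + \<bar>lam\<bar> * cmod (S E k)"
        using c[of k] by (auto simp: D_def norm_mult intro: order_trans[OF norm_triangle_ineq])
      also have "\<dots> \<le> cmod (w k - z k) + \<bar>lam\<bar> * (\<tau> * maj E k)"
        unfolding S_def maj_def by (intro add_left_mono mult_left_mono norm_sum_cubic_term_diff_le I E) simp
      finally have "\<rho> k * cmod (D E k) \<le> \<rho> k * (cmod (w k - z k) + \<bar>lam\<bar> * (\<tau> * maj E k))"
        by (rule mult_left_mono) (simp add: \<rho>_def sobolev_weight_pos less_imp_le)
      then show ?thesis by (simp add: algebra_simps)
    qed
  qed (auto simp: \<rho>_def B_def Na_def lipschitz_const_def power2_eq_square power3_eq_cube algebra_simps
    sobolev_weight_pos less_imp_le)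
  ultimately have "l2_le (\<lambda>k. \<rho> k * cmod ((cubic_step c I lam N w - cubic_step c I lam N z) k)) B"
    using \<tau> lipschitz_const_nonneg[of s \<gamma> lam] hs_norm_nonneg[of "real s" "w - z"]
    by (intro l2_le_of_tendsto[where u = "\<lambda>E k. \<rho> k * cmod (D E k)"] tendsto_intros eventually_finite_subsets_at_top_weakI)
      (auto simp: \<rho>_def B_def Na_def sobolev_weight_pos less_imp_le)
  then show ?thesis by (simp add: hs_norm_le_if_l2_le \<rho>_def B_def Na_def)
qed

theorem proposition3p1:
  fixes s :: nat and \<gamma> T lam :: real and M :: "'a measure" and B :: "'a \<Rightarrow> real \<Rightarrow> real"
  assumes "\<gamma> \<ge> 0" and "real s + \<gamma> > 1/2" and "T > 0" and "lam \<noteq> 0"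
    and "brownian_motion M B"
  shows "\<exists>C :: real \<Rightarrow> real \<Rightarrow> real.
    (\<forall>x y. 0 \<le> x \<and> 0 \<le> y \<longrightarrow> 0 \<le> C x y) \<and>
    (\<forall>x x' y. 0 \<le> x \<and> x < x' \<and> 0 \<le> y \<longrightarrow> C x y < C x' y) \<and>
    (\<forall>x y y'. 0 \<le> x \<and> 0 \<le> y \<and> y < y' \<longrightarrow> C x y < C x y') \<and>
    (\<forall>(\<delta>::real) (R::ereal) (N::enat) (K::nat) (n::nat) z w.
       0 < \<delta> \<and> \<delta> < 1 \<and> 1 \<le> R \<and> 1 \<le> N \<and> 1 \<le> K \<and> n \<le> K - 1 \<and>
       in_piN N z \<and> in_piN N w \<and> hs_summable (real s + \<gamma>) z \<and> hs_summable (real s + \<gamma>) w \<longrightarrow>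
       (let \<tau> = T / real K; tn = real n * \<tau> in
        AE \<omega> in M.
          hs_norm (real s) (Phi \<delta> R (B \<omega>) lam N tn \<tau> w - Phi \<delta> R (B \<omega>) lam N tn \<tau> z)
          \<le> (1 + \<tau> * C (hs_norm (real s + \<gamma>) w) (hs_norm (real s + \<gamma>) z))
             * hs_norm (real s) (w - z)))"
proof (intro exI[of _ "lipschitz_const s \<gamma> lam"] conjI allI impI)
  show "0 \<le> lipschitz_const s \<gamma> lam x y" for x y
    by (rule lipschitz_const_nonneg)
  show "lipschitz_const s \<gamma> lam x y < lipschitz_const s \<gamma> lam x' y" if "0 \<le> x \<and> x < x' \<and> 0 \<le> y" for x x' y
    using assms(4) that by (intro lipschitz_const_strict_mono) auto
  show "lipschitz_const s \<gamma> lam x y < lipschitz_const s \<gamma> lam x y'" if "0 \<le> x \<and> 0 \<le> y \<and> y < y'" for x y y'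
    using assms(4) that by (intro lipschitz_const_strict_mono) auto
next
  \<comment> \<open>The bound holds for every sample path.\<close>
  fix \<delta> :: real and R :: ereal and N :: enat and K n :: nat and z w :: "int \<Rightarrow> complex"
  assume "0 < \<delta> \<and> \<delta> < 1 \<and> 1 \<le> R \<and> 1 \<le> N \<and> 1 \<le> K \<and> n \<le> K - 1 \<and>
    in_piN N z \<and> in_piN N w \<and> hs_summable (real s + \<gamma>) z \<and> hs_summable (real s + \<gamma>) w"
  then show "let \<tau> = T / real K; tn = real n * \<tau> in AE \<omega> in M.
      hs_norm (real s) (Phi \<delta> R (B \<omega>) lam N tn \<tau> w - Phi \<delta> R (B \<omega>) lam N tn \<tau> z)
      \<le> (1 + \<tau> * lipschitz_const s \<gamma> lam (hs_norm (real s + \<gamma>) w) (hs_norm (real s + \<gamma>) z))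
         * hs_norm (real s) (w - z)"
    using assms(1-3) unfolding Let_def Phi_eq_cubic_step
    by (intro AE_I2 hs_norm_cubic_step_diff_le norm_I_int_le) auto
qed


end
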